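(* Let $P=(X,\prec)$ be a finite twin-free interval order with no induced subposet isomorphic to $Z$. Let $\mathcal I=\{I(z)=[L(z),R(z)]:z\in X\}$ be a closed interval representation of $P$ such that (1) no interval strictly contains two other intervals, (2) no interval is strictly contained in two other intervals, (3) whenever $I(u)\subsetneq I(v)$ there are unique $x,y\in X$ with $x$ peeking into $vu$ from the left and $y$ peeking into $vu$ from the right, and moreover all peekers have been retracted, i.e. $\mathcal I$ was obtained from such a representation by, for every proper inclusion $I(u)\subsetneq I(v)$, replacing the interval of its left peeker $x$ by $[L(x),L(v)]$ and the interval of its right peeker $y$ by $[R(v),R(y)]$. For each proper inclusion $I(u)\subsetneq I(v)$, replace $I(u)$ by the open interval $(L(v),R(v))$ (leaving intervals of elements that are not inner intervals of a proper inclusion unchanged). Then the resulting set of intervals is a strict OC interval representation of $P$.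
   Context: Posets are strict (irreflexive) partial orders; twins are points with exactly the same comparabilities; twin-free means no two distinct twins. A closed interval representation assigns a closed real interval $[L(x),R(x)]$ to each $x$ with $x\prec y$ iff $R(x)<L(y)$; $P$ is an interval order if one exists. $I(u)$ is strictly contained in $I(v)$ if $I(u)\subset I(v)$ and they do not have identical endpoints. For $I(u)\subsetneq I(v)$: $x$ peeks into $vu$ if $I(x)$ meets $I(v)$ but not $I(u)$; from the left if moreover $R(x)\le L(u)$; from the right if moreover $R(u)\le L(x)$. An OC interval representation assigns to each $x$ an open or closed real interval $I(x)$ with $x\prec y$ iff every point of $I(x)$ is less than every point of $I(y)$; it is strict if no interval is strictly contained in another. $Z$ is the poset on $a,b,c,d,x,y$ with $a\prec b\prec c\prec d$, $x\prec d$, $a\prec y$ (and transitive consequences), all other pairs incomparable. *)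

theory Defs
  imports Main "HOL-Analysis.Analysis"
begin

definition strict_poset :: "'a set \<Rightarrow> ('a \<Rightarrow> 'a \<Rightarrow> bool) \<Rightarrow> bool" where
  "strict_poset X prec \<longleftrightarrow>
     (\<forall>x\<in>X. \<not> prec x x) \<and>
     (\<forall>x\<in>X. \<forall>y\<in>X. \<forall>z\<in>X. prec x y \<longrightarrow> prec y z \<longrightarrow> prec x z)"

definition twins :: "'a set \<Rightarrow> ('a \<Rightarrow> 'a \<Rightarrow> bool) \<Rightarrow> 'a \<Rightarrow> 'a \<Rightarrow> bool" where
  "twins X prec x y \<longleftrightarrow> (\<forall>z\<in>X. (prec z x \<longleftrightarrow> prec z y) \<and> (prec x z \<longleftrightarrow> prec y z))"

definition twin_free :: "'a set \<Rightarrow> ('a \<Rightarrow> 'a \<Rightarrow> bool) \<Rightarrow> bool" where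
  "twin_free X prec \<longleftrightarrow> (\<forall>x\<in>X. \<forall>y\<in>X. x \<noteq> y \<longrightarrow> \<not> twins X prec x y)"

text \<open>The poset Z on a,b,c,d,x,y, encoded as 0,1,2,3,4,5:
  a<b<c<d, x<d, a<y, plus transitive consequences.\<close>
definition Z_less :: "nat \<Rightarrow> nat \<Rightarrow> bool" where
  "Z_less i j \<longleftrightarrow> (i, j) \<in> {(0,1),(0,2),(0,3),(1,2),(1,3),(2,3),(4,3),(0,5)}"

definition has_induced_Z :: "'a set \<Rightarrow> ('a \<Rightarrow> 'a \<Rightarrow> bool) \<Rightarrow> bool" where
  "has_induced_Z X prec \<longleftrightarrow>
     (\<exists>f. inj_on f {0..<6} \<and> f ` {0..<6} \<subseteq> X \<and>
          (\<forall>i\<in>{0..<6}. \<forall>j\<in>{0..<6}. prec (f i) (f j) \<longleftrightarrow> Z_less i j))"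

definition closed_interval_rep ::
  "'a set \<Rightarrow> ('a \<Rightarrow> 'a \<Rightarrow> bool) \<Rightarrow> ('a \<Rightarrow> real) \<Rightarrow> ('a \<Rightarrow> real) \<Rightarrow> bool" where
  "closed_interval_rep X prec L R \<longleftrightarrow>
     (\<forall>x\<in>X. L x \<le> R x) \<and> (\<forall>x\<in>X. \<forall>y\<in>X. prec x y \<longleftrightarrow> R x < L y)"

definition interval_order :: "'a set \<Rightarrow> ('a \<Rightarrow> 'a \<Rightarrow> bool) \<Rightarrow> bool" where
  "interval_order X prec \<longleftrightarrow> (\<exists>L R. closed_interval_rep X prec L R)"

definition strictly_contained :: "('a \<Rightarrow> real) \<Rightarrow> ('a \<Rightarrow> real) \<Rightarrow> 'a \<Rightarrow> 'a \<Rightarrow> bool" where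
  "strictly_contained L R u v \<longleftrightarrow>
     {L u..R u} \<subseteq> {L v..R v} \<and> (L u, R u) \<noteq> (L v, R v)"

definition meets :: "('a \<Rightarrow> real) \<Rightarrow> ('a \<Rightarrow> real) \<Rightarrow> 'a \<Rightarrow> 'a \<Rightarrow> bool" where
  "meets L R x v \<longleftrightarrow> {L x..R x} \<inter> {L v..R v} \<noteq> {}"

definition peeks :: "('a \<Rightarrow> real) \<Rightarrow> ('a \<Rightarrow> real) \<Rightarrow> 'a \<Rightarrow> 'a \<Rightarrow> 'a \<Rightarrow> bool" where
  "peeks L R x v u \<longleftrightarrow> strictly_contained L R u v \<and> meets L R x v \<and> \<not> meets L R x u"

definition peeks_left :: "('a \<Rightarrow> real) \<Rightarrow> ('a \<Rightarrow> real) \<Rightarrow> 'a \<Rightarrow> 'a \<Rightarrow> 'a \<Rightarrow> bool" where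
  "peeks_left L R x v u \<longleftrightarrow> peeks L R x v u \<and> R x \<le> L u"

definition peeks_right :: "('a \<Rightarrow> real) \<Rightarrow> ('a \<Rightarrow> real) \<Rightarrow> 'a \<Rightarrow> 'a \<Rightarrow> 'a \<Rightarrow> bool" where
  "peeks_right L R x v u \<longleftrightarrow> peeks L R x v u \<and> R u \<le> L x"

definition cond1 :: "'a set \<Rightarrow> ('a \<Rightarrow> real) \<Rightarrow> ('a \<Rightarrow> real) \<Rightarrow> bool" where
  "cond1 X L R \<longleftrightarrow> \<not> (\<exists>v\<in>X. \<exists>u1\<in>X. \<exists>u2\<in>X. u1 \<noteq> u2 \<and>
      strictly_contained L R u1 v \<and> strictly_contained L R u2 v)"

definition cond2 :: "'a set \<Rightarrow> ('a \<Rightarrow> real) \<Rightarrow> ('a \<Rightarrow> real) \<Rightarrow> bool" where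
  "cond2 X L R \<longleftrightarrow> \<not> (\<exists>u\<in>X. \<exists>v1\<in>X. \<exists>v2\<in>X. v1 \<noteq> v2 \<and>
      strictly_contained L R u v1 \<and> strictly_contained L R u v2)"

definition cond3 :: "'a set \<Rightarrow> ('a \<Rightarrow> real) \<Rightarrow> ('a \<Rightarrow> real) \<Rightarrow> bool" where
  "cond3 X L R \<longleftrightarrow> (\<forall>u\<in>X. \<forall>v\<in>X. strictly_contained L R u v \<longrightarrow>
      (\<exists>!x. x \<in> X \<and> peeks_left L R x v u) \<and> (\<exists>!y. y \<in> X \<and> peeks_right L R y v u))"

definition retracted ::
  "'a set \<Rightarrow> ('a \<Rightarrow> real) \<Rightarrow> ('a \<Rightarrow> real) \<Rightarrow> ('a \<Rightarrow> real) \<Rightarrow> ('a \<Rightarrow> real) \<Rightarrow> bool" where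
  "retracted X L0 R0 L R \<longleftrightarrow> (\<forall>z\<in>X.
     (\<forall>u\<in>X. \<forall>v\<in>X. peeks_left L0 R0 z v u \<longrightarrow> R z = L0 v) \<and>
     ((\<not> (\<exists>u\<in>X. \<exists>v\<in>X. peeks_left L0 R0 z v u)) \<longrightarrow> R z = R0 z) \<and>
     (\<forall>u\<in>X. \<forall>v\<in>X. peeks_right L0 R0 z v u \<longrightarrow> L z = R0 v) \<and>
     ((\<not> (\<exists>u\<in>X. \<exists>v\<in>X. peeks_right L0 R0 z v u)) \<longrightarrow> L z = L0 z))"

definition oc_set :: "real \<Rightarrow> real \<Rightarrow> bool \<Rightarrow> real set" where
  "oc_set a b op = (if op then {a<..<b} else {a..b})"

definition oc_interval_rep ::
  "'a set \<Rightarrow> ('a \<Rightarrow> 'a \<Rightarrow> bool) \<Rightarrow> ('a \<Rightarrow> real) \<Rightarrow> ('a \<Rightarrow> real) \<Rightarrow> ('a \<Rightarrow> bool) \<Rightarrow> bool" where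
  "oc_interval_rep X prec lo hi op \<longleftrightarrow>
     (\<forall>x\<in>X. oc_set (lo x) (hi x) (op x) \<noteq> {}) \<and>
     (\<forall>x\<in>X. \<forall>y\<in>X. prec x y \<longleftrightarrow>
        (\<forall>p\<in>oc_set (lo x) (hi x) (op x). \<forall>q\<in>oc_set (lo y) (hi y) (op y). p < q))"

definition strict_oc_interval_rep ::
  "'a set \<Rightarrow> ('a \<Rightarrow> 'a \<Rightarrow> bool) \<Rightarrow> ('a \<Rightarrow> real) \<Rightarrow> ('a \<Rightarrow> real) \<Rightarrow> ('a \<Rightarrow> bool) \<Rightarrow> bool" where
  "strict_oc_interval_rep X prec lo hi op \<longleftrightarrow>
     oc_interval_rep X prec lo hi op \<and>
     (\<forall>u\<in>X. \<forall>v\<in>X. \<not> (oc_set (lo u) (hi u) (op u) \<subseteq> oc_set (lo v) (hi v) (op v) \<and>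
                        (lo u, hi u) \<noteq> (lo v, hi v)))"

definition is_inner :: "'a set \<Rightarrow> ('a \<Rightarrow> real) \<Rightarrow> ('a \<Rightarrow> real) \<Rightarrow> 'a \<Rightarrow> bool" where
  "is_inner X L R u \<longleftrightarrow> (\<exists>v\<in>X. strictly_contained L R u v)"

definition outer :: "'a set \<Rightarrow> ('a \<Rightarrow> real) \<Rightarrow> ('a \<Rightarrow> real) \<Rightarrow> 'a \<Rightarrow> 'a" where
  "outer X L R u = (SOME v. v \<in> X \<and> strictly_contained L R u v)"

definition new_lo :: "'a set \<Rightarrow> ('a \<Rightarrow> real) \<Rightarrow> ('a \<Rightarrow> real) \<Rightarrow> 'a \<Rightarrow> real" where
  "new_lo X L R u = (if is_inner X L R u then L (outer X L R u) else L u)"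

definition new_hi :: "'a set \<Rightarrow> ('a \<Rightarrow> real) \<Rightarrow> ('a \<Rightarrow> real) \<Rightarrow> 'a \<Rightarrow> real" where
  "new_hi X L R u = (if is_inner X L R u then R (outer X L R u) else R u)"

definition new_open :: "'a set \<Rightarrow> ('a \<Rightarrow> real) \<Rightarrow> ('a \<Rightarrow> real) \<Rightarrow> 'a \<Rightarrow> bool" where
  "new_open X L R u = is_inner X L R u"

end

theory Submission
  imports Defs
begin

text \<open>
  Retraction moves every peeker of an inclusion \<open>I(u) \<subset> I(v)\<close> onto an endpoint of \<open>I(v)\<close>.
  Hence no interval has its left end strictly between \<open>R(u)\<close> and \<open>R(v)\<close>: by comparing
  comparabilities, such an interval would have been a right peeker of the same inclusion in the
  original representation, and so starts at \<open>R\<^sub>0(v) \<ge> R(v)\<close>. Symmetrically on the left. Thus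
  widening \<open>I(u)\<close> to the open interval \<open>(L(v), R(v))\<close> destroys no relation \<open>u \<prec> y\<close> or \<open>x \<prec> u\<close>,
  except possibly when both elements are inner intervals; then the overlap of the two outer
  intervals forces the inner interval of each to end exactly where the outer interval of the other
  begins, and together with the two peekers this is an induced copy of \<open>Z\<close>.
  Strictness: a nesting of new intervals would strictly contain an inner interval in two others,
  against condition (2). Only conditions (2) and (3) of the retracted representation are needed.
\<close>

lemma meets_iff:
  "L x \<le> R x \<Longrightarrow> L v \<le> R v \<Longrightarrow> meets L R x v \<longleftrightarrow> L x \<le> R v \<and> L v \<le> R x"
  unfolding meets_def
proof
  assume "{L x..R x} \<inter> {L v..R v} \<noteq> {}"
  then show "L x \<le> R v \<and> L v \<le> R x" by auto
next
  assume "L x \<le> R x" "L v \<le> R v" "L x \<le> R v \<and> L v \<le> R x"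
  then have "max (L x) (L v) \<in> {L x..R x} \<inter> {L v..R v}" by auto
  then show "{L x..R x} \<inter> {L v..R v} \<noteq> {}" by blast
qed

lemma strictly_contained_iff:
  "L u \<le> R u \<Longrightarrow> strictly_contained L R u v \<longleftrightarrow>
     L v \<le> L u \<and> R u \<le> R v \<and> (L u \<noteq> L v \<or> R u \<noteq> R v)"
  unfolding strictly_contained_def by auto

lemma strictly_contained_trans:
  "L u \<le> R u \<Longrightarrow> strictly_contained L R u v \<Longrightarrow> strictly_contained L R v w \<Longrightarrow>
     strictly_contained L R u w"
  by (auto simp: strictly_contained_iff)

lemma strictly_contained_irrefl: "\<not> strictly_contained L R u u"
  by (simp add: strictly_contained_def)

lemma closed_interval_repD:
  assumes "closed_interval_rep X prec L R"
  shows "z \<in> X \<Longrightarrow> L z \<le> R z"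
    and "x \<in> X \<Longrightarrow> y \<in> X \<Longrightarrow> prec x y \<longleftrightarrow> R x < L y"
  using assms by (auto simp: closed_interval_rep_def)

lemma peeks_of_precedences:
  assumes rep: "closed_interval_rep X prec L R"
    and X: "x \<in> X" "u \<in> X" "v \<in> X" "y \<in> X"
    and "prec x u" "\<not> prec x v" "prec u y" "\<not> prec v y"
  shows "peeks_left L R x v u" and "peeks_right L R y v u"
proof -
  have "R x < L u" "L v \<le> R x" "R u < L y" "L y \<le> R v"
    using assms closed_interval_repD(2)[OF rep] by auto
  moreover have "L x \<le> R x" "L u \<le> R u" "L v \<le> R v" "L y \<le> R y"
    using X closed_interval_repD(1)[OF rep] by auto
  ultimately show "peeks_left L R x v u" "peeks_right L R y v u"
    by (auto simp: peeks_left_def peeks_right_def peeks_def meets_iff strictly_contained_iff)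
qed

lemma retracted_right_end_le:
  assumes "closed_interval_rep X prec L0 R0" "retracted X L0 R0 L R" "z \<in> X"
  shows "R z \<le> R0 z"
proof (cases "\<exists>u\<in>X. \<exists>v\<in>X. peeks_left L0 R0 z v u")
  case True
  then obtain u v where uv: "u \<in> X" "v \<in> X" "peeks_left L0 R0 z v u" by blast
  then have "R z = L0 v" using assms unfolding retracted_def by blast
  moreover have "L0 v \<le> R0 z"
    using uv assms closed_interval_repD(1)[OF assms(1)]
    by (auto simp: peeks_left_def peeks_def meets_iff)
  ultimately show ?thesis by simp
next
  case False
  then show ?thesis using assms unfolding retracted_def by auto
qed

lemma retracted_left_end_ge:
  assumes "closed_interval_rep X prec L0 R0" "retracted X L0 R0 L R" "z \<in> X"
  shows "L0 z \<le> L z"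
proof (cases "\<exists>u\<in>X. \<exists>v\<in>X. peeks_right L0 R0 z v u")
  case True
  then obtain u v where uv: "u \<in> X" "v \<in> X" "peeks_right L0 R0 z v u" by blast
  then have "L z = R0 v" using assms unfolding retracted_def by blast
  moreover have "L0 z \<le> R0 v"
    using uv assms closed_interval_repD(1)[OF assms(1)]
    by (auto simp: peeks_right_def peeks_def meets_iff)
  ultimately show ?thesis by simp
next
  case False
  then show ?thesis using assms unfolding retracted_def by auto
qed

lemma oc_set_all_less_iff:
  fixes a b q :: real
  assumes "if opn then a < b else a \<le> b"
  shows "(\<forall>p\<in>oc_set a b opn. p < q) \<longleftrightarrow> (if opn then b \<le> q else b < q)"
  using assms by (auto simp: oc_set_def) (meson dense_le_bounded greaterThanLessThan_iff less_imp_le)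

lemma oc_set_all_greater_iff:
  fixes c d p :: real
  assumes "if opn then c < d else c \<le> d"
  shows "(\<forall>q\<in>oc_set c d opn. p < q) \<longleftrightarrow> (if opn then p \<le> c else p < c)"
  using assms by (auto simp: oc_set_def) (meson dense_ge_bounded greaterThanLessThan_iff less_imp_le)

lemma oc_set_all_ge_iff:
  fixes c d p :: real
  assumes "if opn then c < d else c \<le> d"
  shows "(\<forall>q\<in>oc_set c d opn. p \<le> q) \<longleftrightarrow> p \<le> c"
  using assms by (auto simp: oc_set_def intro: dense_ge_bounded)

lemma oc_set_precedes_iff:
  fixes a b c d :: real
  assumes wf1: "if opn1 then a < b else a \<le> b" and wf2: "if opn2 then c < d else c \<le> d"
  shows "(\<forall>p\<in>oc_set a b opn1. \<forall>q\<in>oc_set c d opn2. p < q) \<longleftrightarrow>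
         (if opn1 \<or> opn2 then b \<le> c else b < c)"
proof -
  have "(\<forall>p\<in>oc_set a b opn1. \<forall>q\<in>oc_set c d opn2. p < q) \<longleftrightarrow>
        (\<forall>q\<in>oc_set c d opn2. if opn1 then b \<le> q else b < q)"
    using oc_set_all_less_iff[OF wf1] by blast
  also have "\<dots> \<longleftrightarrow> (if opn1 \<or> opn2 then b \<le> c else b < c)"
    using oc_set_all_ge_iff[OF wf2, of b] oc_set_all_greater_iff[OF wf2, of b]
    by (cases opn1) (auto split: if_splits)
  finally show ?thesis .
qed

lemma oc_set_subset_endpoints:
  fixes a b c d :: real
  assumes "if opn1 then a < b else a \<le> b" and "oc_set a b opn1 \<subseteq> oc_set c d opn2"
  shows "c \<le> a \<and> b \<le> d"
proof -
  have "oc_set a b opn1 \<subseteq> {c..d}"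
    using assms(2) by (auto simp: oc_set_def split: if_splits)
  then show ?thesis
    using assms(1) by (auto simp: oc_set_def greaterThanLessThan_subseteq_atLeastAtMost_iff
                          split: if_splits)
qed

definition enclosing :: "'a set \<Rightarrow> ('a \<Rightarrow> real) \<Rightarrow> ('a \<Rightarrow> real) \<Rightarrow> 'a \<Rightarrow> 'a" where
  "enclosing X L R u = (if is_inner X L R u then outer X L R u else u)"

lemma outer_strictly_contains:
  "is_inner X L R u \<Longrightarrow> outer X L R u \<in> X \<and> strictly_contained L R u (outer X L R u)"
  unfolding is_inner_def outer_def by (rule someI_ex) blast

lemma enclosing_in: "u \<in> X \<Longrightarrow> enclosing X L R u \<in> X"
  using outer_strictly_contains[of X L R u] by (simp add: enclosing_def)

lemma new_lo_eq: "new_lo X L R u = L (enclosing X L R u)"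
  and new_hi_eq: "new_hi X L R u = R (enclosing X L R u)"
  by (simp_all add: new_lo_def new_hi_def enclosing_def)

locale peeker_representation =
  fixes X :: "'a set" and prec :: "'a \<Rightarrow> 'a \<Rightarrow> bool" and L R :: "'a \<Rightarrow> real"
  assumes rep: "closed_interval_rep X prec L R"
    and unique_peekers: "cond3 X L R"
begin

lemmas left_le_right = closed_interval_repD(1)[OF rep]
   and precedes_iff = closed_interval_repD(2)[OF rep]

lemma obtain_left_peeker:
  assumes "u \<in> X" "v \<in> X" "strictly_contained L R u v"
  obtains x where "x \<in> X" "L v \<le> R x" "R x < L u"
proof -
  obtain x where "x \<in> X" "peeks_left L R x v u"
    using assms unique_peekers unfolding cond3_def by blast
  with assms left_le_right[of x] left_le_right[of u] left_le_right[of v] that show thesis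
    by (auto simp: peeks_left_def peeks_def meets_iff)
qed

lemma obtain_right_peeker:
  assumes "u \<in> X" "v \<in> X" "strictly_contained L R u v"
  obtains y where "y \<in> X" "R u < L y" "L y \<le> R v"
proof -
  obtain y where "y \<in> X" "peeks_right L R y v u"
    using assms unique_peekers unfolding cond3_def by blast
  with assms left_le_right[of y] left_le_right[of u] left_le_right[of v] that show thesis
    by (auto simp: peeks_right_def peeks_def meets_iff)
qed

lemma strictly_contained_strict_ends:
  assumes "u \<in> X" "v \<in> X" "strictly_contained L R u v"
  shows "L v < L u" and "R u < R v"
proof -
  obtain x where "L v \<le> R x" "R x < L u" using obtain_left_peeker[OF assms] .
  then show "L v < L u" by linarith
  obtain y where "R u < L y" "L y \<le> R v" using obtain_right_peeker[OF assms] .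
  then show "R u < R v" by linarith
qed

lemma touching_inclusions_induce_Z:
  assumes X: "x \<in> X" "v \<in> X" "y \<in> X" "w \<in> X"
    and xv: "strictly_contained L R x v" and yw: "strictly_contained L R y w"
    and touch: "R x = L w" "R v = L y" and overlap: "L w < R v"
  shows "has_induced_Z X prec"
proof -
  obtain a where a: "a \<in> X" "L v \<le> R a" "R a < L x"
    using obtain_left_peeker[OF X(1,2) xv] .
  obtain z where z: "z \<in> X" "R y < L z" "L z \<le> R w"
    using obtain_right_peeker[OF X(3,4) yw] .
  have ends: "L x \<le> R x" "L v \<le> R v" "L y \<le> R y" "L w \<le> R w" "L a \<le> R a" "L z \<le> R z"
    using X a z left_le_right by auto
  have "L v < L x" "R x < R v" "L w < L y" "R y < R w"
    using strictly_contained_strict_ends X xv yw by auto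
  note facts = ends this a z touch overlap
  let ?zs = "[a, x, y, z, v, w]" \<comment> \<open>in the roles \<open>a, b, c, d, x, y\<close> of \<open>Z\<close>\<close>
  have "distinct ?zs" using facts by auto
  then have "inj_on (nth ?zs) {0..<6}" by (rule inj_on_nth) auto
  moreover have "nth ?zs ` {0..<6} \<subseteq> X"
    using X a z by (auto simp: less_Suc_eq numeral_eq_Suc)
  moreover have "{0..<6::nat} = {0,1,2,3,4,5}" by auto
  then have "\<forall>i\<in>{0..<6}. \<forall>j\<in>{0..<6}. prec (?zs ! i) (?zs ! j) \<longleftrightarrow> Z_less i j"
    using facts X by (simp add: precedes_iff Z_less_def; linarith?)
  ultimately show ?thesis unfolding has_induced_Z_def by blast
qed

lemma inner_enclosing_strict_ends:
  assumes "u \<in> X" "is_inner X L R u"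
  shows "L (enclosing X L R u) < L u" and "R u < R (enclosing X L R u)"
proof -
  have "outer X L R u \<in> X" "strictly_contained L R u (outer X L R u)"
    using outer_strictly_contains[OF assms(2)] by auto
  then show "L (enclosing X L R u) < L u" "R u < R (enclosing X L R u)"
    using strictly_contained_strict_ends[OF assms(1)] assms(2) by (simp_all add: enclosing_def)
qed

lemma new_interval_wellformed:
  assumes "u \<in> X"
  shows "if new_open X L R u then new_lo X L R u < new_hi X L R u
         else new_lo X L R u \<le> new_hi X L R u"
proof (cases "is_inner X L R u")
  case True
  then have "L (enclosing X L R u) < R (enclosing X L R u)"
    using inner_enclosing_strict_ends[OF assms] left_le_right[OF assms] by linarith
  then show ?thesis using True by (simp add: new_open_def new_lo_eq new_hi_eq)
next
  case False
  then show ?thesis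
    using left_le_right[OF assms] by (simp add: new_open_def new_lo_eq new_hi_eq enclosing_def)
qed

lemma new_intervals_not_nested:
  assumes no_double_inclusion: "cond2 X L R" and X: "u \<in> X" "v \<in> X"
    and sub: "oc_set (new_lo X L R u) (new_hi X L R u) (new_open X L R u)
              \<subseteq> oc_set (new_lo X L R v) (new_hi X L R v) (new_open X L R v)"
    and ne: "(new_lo X L R u, new_hi X L R u) \<noteq> (new_lo X L R v, new_hi X L R v)"
  shows False
proof -
  define u' v' where "u' = enclosing X L R u" and "v' = enclosing X L R v"
  have "u' \<in> X" "v' \<in> X" using X enclosing_in by (auto simp: u'_def v'_def)
  have "L v' \<le> L u' \<and> R u' \<le> R v'"
    using oc_set_subset_endpoints[OF new_interval_wellformed[OF X(1)] sub]
    by (simp add: new_lo_eq new_hi_eq u'_def v'_def)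
  moreover have "(L u', R u') \<noteq> (L v', R v')"
    using ne by (simp add: new_lo_eq new_hi_eq u'_def v'_def)
  ultimately have u'v': "strictly_contained L R u' v'"
    by (auto simp: strictly_contained_def)
  show False
  proof (cases "is_inner X L R u")
    case True
    then have "strictly_contained L R u u'"
      using outer_strictly_contains[OF True] by (simp add: u'_def enclosing_def)
    moreover from this have "strictly_contained L R u v'"
      by (rule strictly_contained_trans[OF left_le_right[OF X(1)] _ u'v'])
    moreover have "u' \<noteq> v'" using u'v' strictly_contained_irrefl by metis
    ultimately show False
      using no_double_inclusion X(1) \<open>u' \<in> X\<close> \<open>v' \<in> X\<close> unfolding cond2_def by metis
  next
    case False
    then show False
      using u'v' \<open>v' \<in> X\<close> by (simp add: u'_def enclosing_def is_inner_def)
  qed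
qed

end

locale retracted_representation = peeker_representation +
  fixes L0 R0 :: "'a \<Rightarrow> real"
  assumes rep0: "closed_interval_rep X prec L0 R0"
    and retracted: "retracted X L0 R0 L R"
begin

lemma left_end_not_between_right_ends:
  assumes X: "u \<in> X" "v \<in> X" "y \<in> X" and uv: "strictly_contained L R u v"
  shows "L y \<le> R u \<or> R v \<le> L y"
proof (rule ccontr)
  assume "\<not> (L y \<le> R u \<or> R v \<le> L y)"
  then have y: "R u < L y" "L y < R v" by auto
  obtain x where x: "x \<in> X" "L v \<le> R x" "R x < L u" using obtain_left_peeker[OF X(1,2) uv] .
  have "peeks_right L0 R0 y v u"
    using peeks_of_precedences(2)[OF rep0 x(1) X(1,2,3)] precedes_iff X x y by auto
  then have "L y = R0 v" using retracted X unfolding retracted_def by blast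
  then show False using retracted_right_end_le[OF rep0 retracted X(2)] y by linarith
qed

lemma right_end_not_between_left_ends:
  assumes X: "u \<in> X" "v \<in> X" "x \<in> X" and uv: "strictly_contained L R u v"
  shows "R x \<le> L v \<or> L u \<le> R x"
proof (rule ccontr)
  assume "\<not> (R x \<le> L v \<or> L u \<le> R x)"
  then have x: "L v < R x" "R x < L u" by auto
  obtain y where y: "y \<in> X" "R u < L y" "L y \<le> R v" using obtain_right_peeker[OF X(1,2) uv] .
  have "peeks_left L0 R0 x v u"
    using peeks_of_precedences(1)[OF rep0 X(3,1,2) y(1)] precedes_iff X x y by auto
  then have "R x = L0 v" using retracted X unfolding retracted_def by blast
  then show False using retracted_left_end_ge[OF rep0 retracted X(2)] x by linarith
qed

lemma outer_intervals_precede: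
  assumes no_Z: "\<not> has_induced_Z X prec"
    and X: "x \<in> X" "x' \<in> X" "y \<in> X" "y' \<in> X"
    and xx': "strictly_contained L R x x'" and yy': "strictly_contained L R y y'"
    and "prec x y"
  shows "R x' \<le> L y'"
proof (rule ccontr)
  assume "\<not> R x' \<le> L y'"
  then have overlap: "L y' < R x'" by simp
  have xy: "R x < L y" using \<open>prec x y\<close> X precedes_iff by auto
  have "R x' \<le> L y"
    using left_end_not_between_right_ends[OF X(1,2,3) xx'] xy by linarith
  moreover have "L y \<le> R x'"
    using right_end_not_between_left_ends[OF X(3,4,2) yy'] overlap by linarith
  moreover have "R x \<le> L y'"
    using right_end_not_between_left_ends[OF X(3,4,1) yy'] xy by linarith
  moreover have "L y' \<le> R x"
    using left_end_not_between_right_ends[OF X(1,2,4) xx'] overlap by linarith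
  ultimately have "R x = L y'" "R x' = L y" by auto
  with touching_inclusions_induce_Z[OF X(1,2,3,4) xx' yy'] overlap no_Z show False by auto
qed

lemma enclosing_precede:
  assumes no_Z: "\<not> has_induced_Z X prec" and X: "x \<in> X" "y \<in> X" and "prec x y"
  shows "R (enclosing X L R x) \<le> L (enclosing X L R y)"
proof -
  define x' y' where "x' = outer X L R x" and "y' = outer X L R y"
  have x': "is_inner X L R x \<Longrightarrow> x' \<in> X \<and> strictly_contained L R x x'"
    and y': "is_inner X L R y \<Longrightarrow> y' \<in> X \<and> strictly_contained L R y y'"
    using outer_strictly_contains[of X L R x] outer_strictly_contains[of X L R y]
    by (auto simp: x'_def y'_def)
  have xy: "R x < L y" using \<open>prec x y\<close> X precedes_iff by auto
  show ?thesis
  proof (cases "is_inner X L R x"; cases "is_inner X L R y")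
    assume "is_inner X L R x" "is_inner X L R y"
    then show ?thesis
      using outer_intervals_precede[OF no_Z X(1) _ X(2) _ _ _ \<open>prec x y\<close>] x' y'
      by (simp add: enclosing_def x'_def y'_def)
  next
    assume "is_inner X L R x" "\<not> is_inner X L R y"
    then show ?thesis
      using left_end_not_between_right_ends[OF X(1) _ X(2), of x'] x' xy
      by (auto simp: enclosing_def x'_def)
  next
    assume "\<not> is_inner X L R x" "is_inner X L R y"
    then show ?thesis
      using right_end_not_between_left_ends[OF X(2) _ X(1), of y'] y' xy
      by (auto simp: enclosing_def y'_def)
  next
    assume "\<not> is_inner X L R x" "\<not> is_inner X L R y"
    then show ?thesis using xy by (simp add: enclosing_def)
  qed
qed

lemma new_precedes_iff:
  assumes no_Z: "\<not> has_induced_Z X prec" and X: "x \<in> X" "y \<in> X"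
  shows "prec x y \<longleftrightarrow>
    (if new_open X L R x \<or> new_open X L R y then new_hi X L R x \<le> new_lo X L R y
     else new_hi X L R x < new_lo X L R y)"
proof -
  define x' y' where "x' = enclosing X L R x" and "y' = enclosing X L R y"
  have x': "if is_inner X L R x then R x < R x' else x' = x"
    and y': "if is_inner X L R y then L y' < L y else y' = y"
    using inner_enclosing_strict_ends X by (simp_all add: x'_def y'_def enclosing_def)
  have "prec x y \<longleftrightarrow>
    (if is_inner X L R x \<or> is_inner X L R y then R x' \<le> L y' else R x' < L y')"
  proof
    assume "prec x y"
    then show "if is_inner X L R x \<or> is_inner X L R y then R x' \<le> L y' else R x' < L y'"
      using enclosing_precede[OF no_Z X] precedes_iff[OF X] x' y'
      by (simp add: x'_def y'_def split: if_splits)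
  next
    assume "if is_inner X L R x \<or> is_inner X L R y then R x' \<le> L y' else R x' < L y'"
    then show "prec x y"
      using precedes_iff[OF X] x' y' by (auto split: if_splits)
  qed
  then show ?thesis by (simp add: new_open_def new_lo_eq new_hi_eq x'_def y'_def)
qed

end

theorem proposition15:
  fixes X :: "'a set" and prec :: "'a \<Rightarrow> 'a \<Rightarrow> bool"
    and L0 R0 L R :: "'a \<Rightarrow> real"
  assumes "finite X"
    and "strict_poset X prec"
    and "twin_free X prec"
    and "interval_order X prec"
    and "\<not> has_induced_Z X prec"
    and "closed_interval_rep X prec L0 R0"
    and "cond1 X L0 R0" and "cond2 X L0 R0" and "cond3 X L0 R0"
    and "retracted X L0 R0 L R"
    and "closed_interval_rep X prec L R"
    and "cond1 X L R" and "cond2 X L R" and "cond3 X L R"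
  shows "strict_oc_interval_rep X prec (new_lo X L R) (new_hi X L R) (new_open X L R)"
proof -
  interpret retracted_representation X prec L R L0 R0
    using assms by unfold_locales
  show ?thesis
    unfolding strict_oc_interval_rep_def oc_interval_rep_def
  proof (intro conjI ballI)
    fix z assume "z \<in> X"
    then show "oc_set (new_lo X L R z) (new_hi X L R z) (new_open X L R z) \<noteq> {}"
      using new_interval_wellformed[of z] by (simp add: oc_set_def split: if_splits)
  next
    fix x y assume "x \<in> X" "y \<in> X"
    then show "prec x y \<longleftrightarrow>
      (\<forall>p\<in>oc_set (new_lo X L R x) (new_hi X L R x) (new_open X L R x).
       \<forall>q\<in>oc_set (new_lo X L R y) (new_hi X L R y) (new_open X L R y). p < q)"
      using new_precedes_iff[OF assms(5)]
        oc_set_precedes_iff[OF new_interval_wellformed new_interval_wellformed] by simp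
  next
    fix u v assume "u \<in> X" "v \<in> X"
    then show "\<not> (oc_set (new_lo X L R u) (new_hi X L R u) (new_open X L R u)
                  \<subseteq> oc_set (new_lo X L R v) (new_hi X L R v) (new_open X L R v) \<and>
                (new_lo X L R u, new_hi X L R u) \<noteq> (new_lo X L R v, new_hi X L R v))"
      using new_intervals_not_nested[OF assms(13)] by blast
  qed
qed

end
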